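(* Let $\Sigma\in\mathbb{R}^{p\times p}$ be positive definite, $X\sim\mathcal{N}_p(0,\Sigma)$, $j\in[p]$ and $S\subset[p]\setminus\{j\}$. If $T_1,T_2\in\mathcal{N}_j(S)$, then $T_1\cup T_2\in\mathcal{N}_j(S)$.
   Context: For $S\subset[p]\setminus\{j\}$, $\beta_j(S)=\arg\min_{\beta\in\mathbb{R}^p,\ \operatorname{supp}(\beta)\subset S}\mathbb{E}[X_j-\beta^TX]^2$ (unique since $\Sigma$ is positive definite), and $\mathcal{N}_j(S)=\{T\subset[p]\setminus\{j\}:\beta_j(T)=\beta_j(S)\}$. *)

theory Defs
  imports "HOL-Probability.Probability"
begin

text \<open>Indices are [p] = {0..<p} (i.e. {..<p}); vectors in R^p are functions nat => real,
  matrices are functions nat => nat => real, only entries with indices < p matter.\<close>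

definition quad_form :: "nat \<Rightarrow> (nat \<Rightarrow> nat \<Rightarrow> real) \<Rightarrow> (nat \<Rightarrow> real) \<Rightarrow> real" where
  "quad_form p \<Sigma> a = (\<Sum>i<p. \<Sum>k<p. a i * \<Sigma> i k * a k)"

definition pos_def :: "nat \<Rightarrow> (nat \<Rightarrow> nat \<Rightarrow> real) \<Rightarrow> bool" where
  "pos_def p \<Sigma> \<longleftrightarrow> (\<forall>i<p. \<forall>k<p. \<Sigma> i k = \<Sigma> k i) \<and>
     (\<forall>a. (\<exists>i<p. a i \<noteq> 0) \<longrightarrow> quad_form p \<Sigma> a > 0)"

text \<open>X = (X_0,...,X_{p-1}) ~ N_p(0,\<Sigma>) on the probability space M, defined via the
  Cramer--Wold characterisation: every nontrivial linear combination a^T X is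
  N(0, a^T \<Sigma> a) distributed.\<close>
definition gaussian_vector ::
  "'s measure \<Rightarrow> nat \<Rightarrow> (nat \<Rightarrow> 's \<Rightarrow> real) \<Rightarrow> (nat \<Rightarrow> nat \<Rightarrow> real) \<Rightarrow> bool" where
  "gaussian_vector M p X \<Sigma> \<longleftrightarrow>
     prob_space M \<and> (\<forall>i<p. X i \<in> borel_measurable M) \<and>
     (\<forall>a. (\<exists>i<p. a i \<noteq> 0) \<longrightarrow>
        distributed M lborel (\<lambda>\<omega>. \<Sum>i<p. a i * X i \<omega>)
          (\<lambda>x. ennreal (normal_density 0 (sqrt (quad_form p \<Sigma> a)) x)))"

definition supp_in :: "(nat \<Rightarrow> real) \<Rightarrow> nat set \<Rightarrow> bool" where
  "supp_in \<beta> S \<longleftrightarrow> (\<forall>i. i \<notin> S \<longrightarrow> \<beta> i = 0)"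

definition pred_risk :: "'s measure \<Rightarrow> nat \<Rightarrow> (nat \<Rightarrow> 's \<Rightarrow> real) \<Rightarrow> nat \<Rightarrow> (nat \<Rightarrow> real) \<Rightarrow> real" where
  "pred_risk M p X j \<beta> = (\<integral>\<omega>. (X j \<omega> - (\<Sum>i<p. \<beta> i * X i \<omega>))\<^sup>2 \<partial>M)"

definition beta_j :: "'s measure \<Rightarrow> nat \<Rightarrow> (nat \<Rightarrow> 's \<Rightarrow> real) \<Rightarrow> nat \<Rightarrow> nat set \<Rightarrow> (nat \<Rightarrow> real)" where
  "beta_j M p X j S = (THE \<beta>. supp_in \<beta> S \<and>
      (\<forall>\<beta>'. supp_in \<beta>' S \<longrightarrow> pred_risk M p X j \<beta> \<le> pred_risk M p X j \<beta>'))"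

definition N_j :: "'s measure \<Rightarrow> nat \<Rightarrow> (nat \<Rightarrow> 's \<Rightarrow> real) \<Rightarrow> nat \<Rightarrow> nat set \<Rightarrow> nat set set" where
  "N_j M p X j S = {T. T \<subseteq> {..<p} - {j} \<and> beta_j M p X j T = beta_j M p X j S}"

end

theory Submission
  imports Defs
begin

text \<open>Since X is Gaussian with covariance \<Sigma>, the risk of a coefficient vector \<beta> is the
  \<Sigma>-quadratic form of the residual e_j - \<beta>. Hence \<beta>_j(T) is the \<Sigma>-orthogonal projection
  of e_j onto the vectors supported in T: it is the unique \<beta> supported in T whose residual
  is \<Sigma>-orthogonal to all of them. If T1, T2 \<in> N_j(S), the common coefficient vector has a
  residual orthogonal to everything supported in T1 and in T2, hence in T1 \<union> T2, so it is
  also \<beta>_j(T1 \<union> T2).\<close>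

definition cov_form :: "nat \<Rightarrow> (nat \<Rightarrow> nat \<Rightarrow> real) \<Rightarrow> (nat \<Rightarrow> real) \<Rightarrow> (nat \<Rightarrow> real) \<Rightarrow> real" where
  "cov_form p \<Sigma> a b = (\<Sum>i<p. \<Sum>k<p. a i * \<Sigma> i k * b k)"

definition cov_orth :: "nat \<Rightarrow> (nat \<Rightarrow> nat \<Rightarrow> real) \<Rightarrow> (nat \<Rightarrow> real) \<Rightarrow> nat set \<Rightarrow> bool" where
  "cov_orth p \<Sigma> r T \<longleftrightarrow> (\<forall>d. supp_in d T \<longrightarrow> cov_form p \<Sigma> r d = 0)"

definition residual :: "nat \<Rightarrow> (nat \<Rightarrow> real) \<Rightarrow> (nat \<Rightarrow> real)" where
  "residual j \<beta> = (\<lambda>i. (if i = j then 1 else 0) - \<beta> i)"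

lemma quad_form_eq_cov_form: "quad_form p \<Sigma> a = cov_form p \<Sigma> a a"
  by (simp add: quad_form_def cov_form_def)

lemma cov_form_add_right: "cov_form p \<Sigma> a (\<lambda>k. b k + c k) = cov_form p \<Sigma> a b + cov_form p \<Sigma> a c"
  by (simp add: cov_form_def algebra_simps sum.distrib)

lemma cov_form_diff_right: "cov_form p \<Sigma> a (\<lambda>k. b k - c k) = cov_form p \<Sigma> a b - cov_form p \<Sigma> a c"
  by (simp add: cov_form_def algebra_simps sum_subtractf)

lemma cov_form_mult_right: "cov_form p \<Sigma> a (\<lambda>k. x * b k) = x * cov_form p \<Sigma> a b"
  by (simp add: cov_form_def algebra_simps sum_distrib_left)

lemma cov_form_diff_left: "cov_form p \<Sigma> (\<lambda>k. b k - c k) a = cov_form p \<Sigma> b a - cov_form p \<Sigma> c a"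
  by (simp add: cov_form_def algebra_simps sum_subtractf)

lemma cov_form_mult_left: "cov_form p \<Sigma> (\<lambda>k. x * b k) a = x * cov_form p \<Sigma> b a"
  by (simp add: cov_form_def algebra_simps sum_distrib_left)

lemma cov_form_commute:
  assumes "pos_def p \<Sigma>"
  shows "cov_form p \<Sigma> a b = cov_form p \<Sigma> b a"
proof -
  have sym: "\<Sigma> i k = \<Sigma> k i" if "i < p" "k < p" for i k
    using assms that by (auto simp: pos_def_def)
  have "cov_form p \<Sigma> a b = (\<Sum>k<p. \<Sum>i<p. a i * \<Sigma> i k * b k)"
    unfolding cov_form_def by (rule sum.swap)
  also have "\<dots> = cov_form p \<Sigma> b a"
    unfolding cov_form_def by (intro sum.cong refl) (simp add: sym mult.commute mult.left_commute)
  finally show ?thesis .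
qed

lemma quad_form_nonneg:
  assumes "pos_def p \<Sigma>"
  shows "quad_form p \<Sigma> a \<ge> 0"
proof (cases "\<exists>i<p. a i \<noteq> 0")
  case True
  then show ?thesis using assms by (auto simp: pos_def_def intro: less_imp_le)
next
  case False
  then show ?thesis by (simp add: quad_form_def)
qed

lemma quad_form_nonpos_imp_zero:
  assumes "pos_def p \<Sigma>" "quad_form p \<Sigma> a \<le> 0" "i < p"
  shows "a i = 0"
  using assms by (auto simp: pos_def_def not_less[symmetric])

lemma quad_form_diff:
  assumes "pos_def p \<Sigma>"
  shows "quad_form p \<Sigma> (\<lambda>i. r i - d i) = quad_form p \<Sigma> r - 2 * cov_form p \<Sigma> r d + quad_form p \<Sigma> d"
  using cov_form_commute[OF assms, of d r]
  by (simp add: quad_form_eq_cov_form cov_form_diff_left cov_form_diff_right)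

lemma cov_orth_diff:
  assumes "cov_orth p \<Sigma> r T" "cov_orth p \<Sigma> s T"
  shows "cov_orth p \<Sigma> (\<lambda>i. r i - c * s i) T"
  using assms by (simp add: cov_orth_def cov_form_diff_left cov_form_mult_left)

lemma cov_orth_insert:
  assumes orth: "cov_orth p \<Sigma> r T" and k: "cov_form p \<Sigma> r (\<lambda>i. if i = k then 1 else 0) = 0"
  shows "cov_orth p \<Sigma> r (insert k T)"
  unfolding cov_orth_def
proof (intro allI impI)
  fix d assume d: "supp_in d (insert k T)"
  define d' where "d' = (\<lambda>i. if i = k then 0 else d i)"
  have "supp_in d' T" using d by (auto simp: supp_in_def d'_def)
  then have "cov_form p \<Sigma> r d' = 0" using orth by (simp add: cov_orth_def)
  moreover have "d = (\<lambda>i. d k * (if i = k then 1 else 0) + d' i)"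
    by (auto simp: d'_def)
  moreover have "cov_form p \<Sigma> r (\<lambda>i. d k * (if i = k then 1 else 0) + d' i)
      = d k * cov_form p \<Sigma> r (\<lambda>i. if i = k then 1 else 0) + cov_form p \<Sigma> r d'"
    by (simp only: cov_form_add_right cov_form_mult_right)
  ultimately show "cov_form p \<Sigma> r d = 0"
    using k by simp
qed

lemma cov_orth_Un:
  assumes orth1: "cov_orth p \<Sigma> r T1" and orth2: "cov_orth p \<Sigma> r T2"
  shows "cov_orth p \<Sigma> r (T1 \<union> T2)"
  unfolding cov_orth_def
proof (intro allI impI)
  fix d assume d: "supp_in d (T1 \<union> T2)"
  define d1 where "d1 = (\<lambda>i. if i \<in> T1 then d i else 0)"
  define d2 where "d2 = (\<lambda>i. if i \<in> T1 then 0 else d i)"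
  have "supp_in d1 T1" "supp_in d2 T2" using d by (auto simp: supp_in_def d1_def d2_def)
  then have "cov_form p \<Sigma> r d1 = 0" "cov_form p \<Sigma> r d2 = 0"
    using orth1 orth2 by (auto simp: cov_orth_def)
  moreover have "d = (\<lambda>i. d1 i + d2 i)" by (auto simp: d1_def d2_def)
  ultimately show "cov_form p \<Sigma> r d = 0" by (simp only: cov_form_add_right)
qed

text \<open>Gram--Schmidt, one coordinate at a time: to absorb k, subtract from the old residual
  the multiple of the residual s of e_k that cancels its component along e_k.\<close>
lemma cov_projection_exists:
  assumes pd: "pos_def p \<Sigma>" and "finite T" and "T \<subseteq> {..<p}"
  shows "\<exists>\<beta>. supp_in \<beta> T \<and> cov_orth p \<Sigma> (\<lambda>i. y i - \<beta> i) T"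
  using assms(2,3)
proof (induction T arbitrary: y rule: finite_induct)
  case empty
  show ?case by (rule exI[of _ "\<lambda>_. 0"]) (simp add: supp_in_def cov_orth_def cov_form_def)
next
  case (insert k T)
  define e where "e = (\<lambda>i. if i = k then (1::real) else 0)"
  obtain \<beta>1 where \<beta>1: "supp_in \<beta>1 T" and orth_r: "cov_orth p \<Sigma> (\<lambda>i. y i - \<beta>1 i) T"
    using insert by blast
  obtain \<gamma> where \<gamma>: "supp_in \<gamma> T" and orth_s: "cov_orth p \<Sigma> (\<lambda>i. e i - \<gamma> i) T"
    using insert by blast
  define r where "r = (\<lambda>i. y i - \<beta>1 i)"
  define s where "s = (\<lambda>i. e i - \<gamma> i)"
  have "s k = 1" using \<gamma> insert.hyps by (auto simp: supp_in_def s_def e_def)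
  then have "quad_form p \<Sigma> s > 0"
    using pd insert.prems unfolding pos_def_def by (metis insert_subset lessThan_iff one_neq_zero)
  moreover have "cov_form p \<Sigma> s \<gamma> = 0" using orth_s \<gamma> by (simp add: cov_orth_def s_def)
  ultimately have s_e_pos: "cov_form p \<Sigma> s e > 0"
    by (simp add: quad_form_eq_cov_form s_def cov_form_diff_right)
  define c where "c = cov_form p \<Sigma> r e / cov_form p \<Sigma> s e"
  have "cov_orth p \<Sigma> (\<lambda>i. r i - c * s i) T"
    using orth_r orth_s by (simp add: cov_orth_diff r_def s_def)
  moreover have "cov_form p \<Sigma> (\<lambda>i. r i - c * s i) e = 0"
    using s_e_pos by (simp add: cov_form_diff_left cov_form_mult_left, simp add: c_def)
  ultimately have "cov_orth p \<Sigma> (\<lambda>i. r i - c * s i) (insert k T)"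
    by (simp add: cov_orth_insert e_def)
  moreover have "(\<lambda>i. r i - c * s i) = (\<lambda>i. y i - (\<beta>1 i + c * s i))"
    by (auto simp: r_def)
  moreover have "supp_in (\<lambda>i. \<beta>1 i + c * s i) (insert k T)"
    using \<beta>1 \<gamma> by (auto simp: supp_in_def s_def e_def)
  ultimately show ?case by auto
qed

lemma (in prob_space) integral_square_centered_normal:
  assumes "0 < \<sigma>" "distributed M lborel Y (normal_density 0 \<sigma>)"
  shows "(\<integral>\<omega>. (Y \<omega>)\<^sup>2 \<partial>M) = \<sigma>\<^sup>2"
  using normal_distributed_variance[OF assms] normal_distributed_expectation[OF assms] by simp

lemma sum_residual_mult:
  assumes "j < p"
  shows "(\<Sum>i<p. residual j \<beta> i * x i) = x j - (\<Sum>i<p. \<beta> i * x i)"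
proof -
  have "(\<Sum>i<p. residual j \<beta> i * x i) = (\<Sum>i<p. (if i = j then x i else 0) - \<beta> i * x i)"
    by (intro sum.cong) (auto simp: residual_def left_diff_distrib)
  also have "\<dots> = x j - (\<Sum>i<p. \<beta> i * x i)"
    using assms by (simp add: sum_subtractf)
  finally show ?thesis .
qed

lemma pred_risk_eq_quad_form:
  assumes pd: "pos_def p \<Sigma>" and X: "gaussian_vector M p X \<Sigma>" and j: "j < p"
    and T: "T \<subseteq> {..<p} - {j}" and \<beta>: "supp_in \<beta> T"
  shows "pred_risk M p X j \<beta> = quad_form p \<Sigma> (residual j \<beta>)"
proof -
  let ?a = "residual j \<beta>"
  have "?a j = 1" using \<beta> T by (auto simp: supp_in_def residual_def)
  then have nonzero: "\<exists>i<p. ?a i \<noteq> 0" using j by (metis one_neq_zero)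
  then have pos: "quad_form p \<Sigma> ?a > 0" using pd by (simp add: pos_def_def)
  interpret prob_space M using X by (simp add: gaussian_vector_def)
  have "distributed M lborel (\<lambda>\<omega>. \<Sum>i<p. ?a i * X i \<omega>)
      (\<lambda>x. ennreal (normal_density 0 (sqrt (quad_form p \<Sigma> ?a)) x))"
    using X nonzero by (simp add: gaussian_vector_def)
  then have "(\<integral>\<omega>. (\<Sum>i<p. ?a i * X i \<omega>)\<^sup>2 \<partial>M) = (sqrt (quad_form p \<Sigma> ?a))\<^sup>2"
    using pos by (intro integral_square_centered_normal) simp_all
  then show ?thesis using pos by (simp add: pred_risk_def sum_residual_mult[OF j])
qed

lemma pred_risk_orth_decomp:
  assumes pd: "pos_def p \<Sigma>" and X: "gaussian_vector M p X \<Sigma>" and j: "j < p"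
    and T: "T \<subseteq> {..<p} - {j}" and \<beta>: "supp_in \<beta> T" and \<beta>': "supp_in \<beta>' T"
    and orth: "cov_orth p \<Sigma> (residual j \<beta>) T"
  shows "pred_risk M p X j \<beta>' = pred_risk M p X j \<beta> + quad_form p \<Sigma> (\<lambda>i. \<beta>' i - \<beta> i)"
proof -
  let ?d = "\<lambda>i. \<beta>' i - \<beta> i"
  have "supp_in ?d T" using \<beta> \<beta>' by (auto simp: supp_in_def)
  then have orth_d: "cov_form p \<Sigma> (residual j \<beta>) ?d = 0" using orth by (simp add: cov_orth_def)
  have "pred_risk M p X j \<beta>' = quad_form p \<Sigma> (residual j \<beta>')"
    by (rule pred_risk_eq_quad_form[OF pd X j T \<beta>'])
  also have "residual j \<beta>' = (\<lambda>i. residual j \<beta> i - ?d i)"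
    by (auto simp: residual_def)
  also have "quad_form p \<Sigma> (\<lambda>i. residual j \<beta> i - ?d i)
      = quad_form p \<Sigma> (residual j \<beta>) - 2 * cov_form p \<Sigma> (residual j \<beta>) ?d + quad_form p \<Sigma> ?d"
    by (rule quad_form_diff[OF pd])
  also have "\<dots> = pred_risk M p X j \<beta> + quad_form p \<Sigma> ?d"
    by (simp only: orth_d pred_risk_eq_quad_form[OF pd X j T \<beta>])
  finally show ?thesis .
qed

lemma beta_j_eqI:
  assumes pd: "pos_def p \<Sigma>" and X: "gaussian_vector M p X \<Sigma>" and j: "j < p"
    and T: "T \<subseteq> {..<p} - {j}" and \<beta>: "supp_in \<beta> T"
    and orth: "cov_orth p \<Sigma> (residual j \<beta>) T"
  shows "beta_j M p X j T = \<beta>"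
  unfolding beta_j_def
proof (rule the_equality)
  have "pred_risk M p X j \<beta> \<le> pred_risk M p X j \<beta>'" if "supp_in \<beta>' T" for \<beta>'
    using pred_risk_orth_decomp[OF pd X j T \<beta> that orth] quad_form_nonneg[OF pd, of "\<lambda>i. \<beta>' i - \<beta> i"]
    by linarith
  then show "supp_in \<beta> T \<and> (\<forall>\<beta>'. supp_in \<beta>' T \<longrightarrow> pred_risk M p X j \<beta> \<le> pred_risk M p X j \<beta>')"
    using \<beta> by blast
next
  fix \<beta>'
  assume "supp_in \<beta>' T \<and> (\<forall>\<beta>''. supp_in \<beta>'' T \<longrightarrow> pred_risk M p X j \<beta>' \<le> pred_risk M p X j \<beta>'')"
  then have \<beta>': "supp_in \<beta>' T" and "pred_risk M p X j \<beta>' \<le> pred_risk M p X j \<beta>"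
    using \<beta> by blast+
  then have "quad_form p \<Sigma> (\<lambda>i. \<beta>' i - \<beta> i) \<le> 0"
    using pred_risk_orth_decomp[OF pd X j T \<beta> \<beta>' orth] by linarith
  then have "\<beta>' i = \<beta> i" if "i < p" for i
    using quad_form_nonpos_imp_zero[OF pd _ that, of "\<lambda>i. \<beta>' i - \<beta> i"] by simp
  moreover have "\<beta>' i = \<beta> i" if "\<not> i < p" for i
  proof -
    have "i \<notin> T" using T that by auto
    then show ?thesis using \<beta> \<beta>' by (simp add: supp_in_def)
  qed
  ultimately show "\<beta>' = \<beta>" by (metis ext)
qed

lemma beta_j_cov_orth:
  assumes pd: "pos_def p \<Sigma>" and X: "gaussian_vector M p X \<Sigma>" and j: "j < p"
    and T: "T \<subseteq> {..<p} - {j}"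
  shows "supp_in (beta_j M p X j T) T \<and> cov_orth p \<Sigma> (residual j (beta_j M p X j T)) T"
proof -
  have "finite T" using T finite_subset by blast
  then obtain \<beta> where "supp_in \<beta> T" "cov_orth p \<Sigma> (residual j \<beta>) T"
    using cov_projection_exists[OF pd, of T "\<lambda>i. if i = j then 1 else 0"] T
    by (auto simp: residual_def)
  with beta_j_eqI[OF pd X j T] show ?thesis by simp
qed

theorem lemma5:
  fixes M :: "'s measure" and p :: nat and X :: "nat \<Rightarrow> 's \<Rightarrow> real"
    and \<Sigma> :: "nat \<Rightarrow> nat \<Rightarrow> real" and j :: nat and S T1 T2 :: "nat set"
  assumes "pos_def p \<Sigma>"
    and "gaussian_vector M p X \<Sigma>"
    and "j < p"
    and "S \<subseteq> {..<p} - {j}"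
    and "T1 \<in> N_j M p X j S"
    and "T2 \<in> N_j M p X j S"
  shows "T1 \<union> T2 \<in> N_j M p X j S"
proof -
  note pd = assms(1) and X = assms(2) and j = assms(3)
  define \<beta> where "\<beta> = beta_j M p X j S"
  have T1: "T1 \<subseteq> {..<p} - {j}" "beta_j M p X j T1 = \<beta>"
    and T2: "T2 \<subseteq> {..<p} - {j}" "beta_j M p X j T2 = \<beta>"
    using assms(5,6) by (auto simp: N_j_def \<beta>_def)
  have "supp_in \<beta> T1" "cov_orth p \<Sigma> (residual j \<beta>) T1"
    using beta_j_cov_orth[OF pd X j T1(1)] T1(2) by auto
  moreover have "cov_orth p \<Sigma> (residual j \<beta>) T2"
    using beta_j_cov_orth[OF pd X j T2(1)] T2(2) by auto
  moreover have U: "T1 \<union> T2 \<subseteq> {..<p} - {j}" using T1 T2 by auto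
  ultimately have "beta_j M p X j (T1 \<union> T2) = \<beta>"
    by (intro beta_j_eqI[OF pd X j U] cov_orth_Un) (auto simp: supp_in_def)
  then show ?thesis using U by (simp add: N_j_def \<beta>_def)
qed

end
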